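(* Let $T$ take values in $\mathcal{S}\subseteq\mathbb{N}$, $q_t=\mathbb{P}(T=t)$, with $\mathbb{E}[T^\delta]<\infty$ for some $\delta>0$. Fix $\tau\in(0,1)$, a kernel $\kappa:\mathcal{S}^2\to[0,\infty)$, and two vertex types $t,s\in\mathcal{S}$ that are stable at tolerance $\tau$; set $\Lambda_n(t,s)=\lfloor nq_tq_s\kappa(t,s)\rfloor$. Let $\kappa_n'$ be another kernel for which there exist $\alpha\in(1/2-\tau/2,1/2)$ and $C>0$ with $$\kappa_n'(t,s)\ge\kappa(t,s)+\frac{Cn^{-1/2+\alpha}}{\sqrt{q_tq_s}},$$ and let $A_n$ be the arc-to-vertex-type function of $\texttt{IRD}_n(T,\kappa_n')$. Then for all sufficiently large $n$, $\mathbb{P}(A_n(t,s)<\Lambda_n(t,s))\le2\exp(-\log(n)^2/2)$.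
   Context: $\texttt{IRD}_n(T,\kappa_n')$: vertex set $[n]$, types $T_v$ i.i.d. as $T$, each arc $(v,w)$, $v\ne w$, present independently with probability $\min\{\kappa_n'(T_v,T_w)/n,1\}$. Arc-to-vertex-type function: $A_n(t,s)=|\{(v,w)\text{ arc}:T_v=t,T_w=s\}|$. Stability: $u_n^\uparrow(\tau)=\inf\{t:q_s<n^{-1+\tau}\ \forall s\ge t\}$; type $t$ is stable at tolerance $\tau$ if $t<u_n^\uparrow(\tau)$. *)

theory Defs
  imports "HOL-Probability.Probability"
begin

text \<open>Vertex set [n] = {1..n}; a realisation of IRD_n is a pair (types, arcs):
  types v is the type of vertex v, arcs (v,w) says whether the arc (v,w) is present.\<close>

definition vertices :: "nat \<Rightarrow> nat set" where
  "vertices n = {1..n}"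

definition arc_slots :: "nat \<Rightarrow> (nat \<times> nat) set" where
  "arc_slots n = {(v, w). v \<in> vertices n \<and> w \<in> vertices n \<and> v \<noteq> w}"

definition IRD :: "nat \<Rightarrow> nat pmf \<Rightarrow> (nat \<Rightarrow> nat \<Rightarrow> real)
    \<Rightarrow> ((nat \<Rightarrow> nat) \<times> (nat \<times> nat \<Rightarrow> bool)) pmf" where
  "IRD n T k =
     bind_pmf (Pi_pmf (vertices n) 0 (\<lambda>_. T)) (\<lambda>types.
     bind_pmf (Pi_pmf (arc_slots n) False
                 (\<lambda>(v, w). bernoulli_pmf (min (k (types v) (types w) / real n) 1))) (\<lambda>arcs.
     return_pmf (types, arcs)))"

definition arc_count :: "nat \<Rightarrow> (nat \<Rightarrow> nat) \<times> (nat \<times> nat \<Rightarrow> bool) \<Rightarrow> nat \<Rightarrow> nat \<Rightarrow> nat" where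
  "arc_count n G t s =
     card {(v, w). (v, w) \<in> arc_slots n \<and> snd G (v, w) \<and> fst G v = t \<and> fst G w = s}"

definition u_up :: "nat pmf \<Rightarrow> nat \<Rightarrow> real \<Rightarrow> nat" where
  "u_up T n \<tau> = Inf {t. \<forall>s\<ge>t. pmf T s < real n powr (-1 + \<tau>)}"

definition stable :: "nat pmf \<Rightarrow> nat \<Rightarrow> real \<Rightarrow> nat \<Rightarrow> bool" where
  "stable T n \<tau> t \<longleftrightarrow> t < u_up T n \<tau>"

end

theory Submission
  imports Defs "HOL-Real_Asymp.Real_Asymp"
begin

(* Condition on the vertex types. By Hoeffding's inequality the type counts satisfy
   N_u >= n q_u - sqrt n log n for u = t, s, except with probability exp(-2 log^2 n) each.
   Given such types there are at least N_t N_s - n possible (t,s)-arcs, each present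
   independently with probability at least kappa'_n(t,s)/n, so A_n(t,s) dominates a binomial
   variable with mean mu. The perturbation C n^(-1/2+alpha) / sqrt(q_t q_s) of kappa makes
   mu - Lambda_n of order n^(1/2+alpha), which beats sqrt mu log n, and the multiplicative
   Chernoff bound exp(-(mu - Lambda_n)^2 / (2 mu)) yields exp(-log^2 n / 2). *)

lemma nn_integral_binomial_pmf_exp:
  assumes p: "p \<in> {0..1}"
  shows "(\<integral>\<^sup>+x. ennreal (exp (- l * real x)) \<partial>binomial_pmf m p)
           = ennreal ((1 - p + p * exp (- l)) ^ m)"
proof (induction m)
  case 0
  then show ?case using p by (simp add: binomial_pmf_0)
next
  case (Suc m)
  define g where "g = 1 - p + p * exp (- l)"
  have g_nonneg: "0 \<le> g" using p by (auto simp: g_def intro!: add_nonneg_nonneg)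
  have "(\<integral>\<^sup>+x. ennreal (exp (- l * real x)) \<partial>binomial_pmf (Suc m) p)
      = (\<integral>\<^sup>+b. (\<integral>\<^sup>+k. ennreal (exp (- l * (if b then 1 else 0))) * ennreal (exp (- l * real k))
            \<partial>binomial_pmf m p) \<partial>bernoulli_pmf p)"
    using p unfolding binomial_pmf_Suc[OF p]
    by (simp del: nn_integral_bernoulli_pmf, intro nn_integral_cong)
       (auto simp: ennreal_mult'[symmetric] exp_add[symmetric] algebra_simps)
  also have "\<dots> = (\<integral>\<^sup>+b. ennreal (exp (- l * (if b then 1 else 0))) * ennreal (g ^ m) \<partial>bernoulli_pmf p)"
    using Suc by (simp add: nn_integral_cmult g_def)
  also have "\<dots> = ennreal (exp (- l) * g ^ m * p + g ^ m * (1 - p))"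
    using p g_nonneg by (simp add: ennreal_mult'[symmetric] ennreal_plus[symmetric] del: ennreal_plus)
  also have "\<dots> = ennreal (g ^ Suc m)"
    by (simp add: g_def algebra_simps)
  finally show ?case by (simp add: g_def)
qed

lemma exp_neg_le_quadratic:
  fixes x :: real
  assumes "0 \<le> x"
  shows "exp (- x) \<le> 1 - x + x\<^sup>2 / 2"
proof -
  let ?f = "\<lambda>y::real. 1 - y + y\<^sup>2 / 2 - exp (- y)"
  have "?f 0 \<le> ?f x"
  proof (rule DERIV_nonneg_imp_nondecreasing[OF assms])
    fix y :: real
    assume "0 \<le> y"
    have "(?f has_real_derivative - 1 + y + exp (- y)) (at y)"
      by (auto intro!: derivative_eq_intros)
    moreover have "0 \<le> - 1 + y + exp (- y)"
      using exp_ge_add_one_self[of "- y"] by linarith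
    ultimately show "\<exists>d. (?f has_real_derivative d) (at y) \<and> 0 \<le> d" by blast
  qed
  then show ?thesis by simp
qed

lemma binomial_mgf_le_exp:
  assumes p: "p \<in> {0..1}" and l: "0 \<le> l" "l \<le> 2" and \<mu>: "\<mu> \<le> real m * p"
  shows "(1 - p + p * exp (- l)) ^ m \<le> exp (\<mu> * (l\<^sup>2 / 2 - l))"
proof -
  have "1 - p + p * exp (- l) \<le> exp (p * (exp (- l) - 1))"
    using exp_ge_add_one_self[of "p * (exp (- l) - 1)"] by (simp add: algebra_simps)
  then have "(1 - p + p * exp (- l)) ^ m \<le> exp (p * (exp (- l) - 1)) ^ m"
    by (rule power_mono) (use p in \<open>auto intro!: add_nonneg_nonneg\<close>)
  also have "\<dots> = exp (real m * p * (exp (- l) - 1))"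
    by (simp add: exp_of_nat_mult[symmetric] mult_ac)
  also have "\<dots> \<le> exp (real m * p * (l\<^sup>2 / 2 - l))"
    using exp_neg_le_quadratic[OF l(1)] p by (auto intro!: mult_left_mono)
  also have "\<dots> \<le> exp (\<mu> * (l\<^sup>2 / 2 - l))"
  proof -
    have "l * l \<le> 2 * l" using mult_right_mono[OF l(2,1)] .
    then have "l\<^sup>2 / 2 - l \<le> 0" by (simp add: power2_eq_square)
    then show ?thesis using \<mu> by (simp add: mult_right_mono_neg)
  qed
  finally show ?thesis .
qed

lemma prob_binomial_pmf_le_Chernoff:
  assumes p: "p \<in> {0..1}" and k: "0 \<le> k" "k \<le> \<mu>" and \<mu>: "0 < \<mu>" "\<mu> \<le> real m * p"
  shows "measure_pmf.prob (binomial_pmf m p) {x. real x \<le> k} \<le> exp (- (\<mu> - k)\<^sup>2 / (2 * \<mu>))"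
proof (cases "k = \<mu>")
  case False
  define l where "l = (\<mu> - k) / \<mu>"
  have l: "0 < l" "l \<le> 1" using False k \<mu> by (auto simp: l_def field_simps)
  have "ennreal (measure_pmf.prob (binomial_pmf m p) {x. real x \<le> k})
      \<le> ennreal (exp (l * k)) * ennreal ((1 - p + p * exp (- l)) ^ m)"
    using Chernoff_ineq_nn_integral_le[of l UNIV "binomial_pmf m p" real k] l
      nn_integral_binomial_pmf_exp[OF p, where l = l and m = m]
    by (simp add: measure_pmf.emeasure_eq_measure)
  also have "\<dots> \<le> ennreal (exp (l * k) * exp (\<mu> * (l\<^sup>2 / 2 - l)))"
    using binomial_mgf_le_exp[OF p, of l \<mu> m] l \<mu>
    by (simp add: ennreal_mult'[symmetric] ennreal_leI)
  also have "exp (l * k) * exp (\<mu> * (l\<^sup>2 / 2 - l)) = exp (- (\<mu> - k)\<^sup>2 / (2 * \<mu>))"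
  proof -
    have "l * k + \<mu> * (l\<^sup>2 / 2 - l) = - (\<mu> - k)\<^sup>2 / (2 * \<mu>)"
      using \<mu> unfolding l_def by (simp add: field_simps power2_eq_square)
    then show ?thesis by (simp add: exp_add[symmetric])
  qed
  finally show ?thesis by (simp add: ennreal_le_iff)
qed simp

lemma map_pmf_eq_bernoulli_pmf: "map_pmf (\<lambda>x. x = t) T = bernoulli_pmf (pmf T t)"
proof (rule pmf_eqI)
  fix b :: bool
  show "pmf (map_pmf (\<lambda>x. x = t) T) b = pmf (bernoulli_pmf (pmf T t)) b"
  proof (cases b)
    case True
    have "(\<lambda>x. x = t) -` {True} = {t}" by auto
    then show ?thesis using True by (simp add: pmf_map measure_pmf_single pmf_le_1)
  next
    case False
    have "(\<lambda>x. x = t) -` {False} = UNIV - {t}" by auto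
    then show ?thesis using False measure_pmf.prob_compl[of "{t}" T]
      by (simp add: pmf_map measure_pmf_single pmf_le_1)
  qed
qed

lemma card_Pi_pmf_eq_binomial_pmf:
  assumes "finite V"
  shows "map_pmf (\<lambda>ty. card {v\<in>V. ty v = t}) (Pi_pmf V d (\<lambda>_. T))
           = binomial_pmf (card V) (pmf T t)"
proof -
  have "Pi_pmf V (d = t) (\<lambda>_. map_pmf (\<lambda>x. x = t) T)
      = map_pmf (\<lambda>ty. (\<lambda>x. x = t) \<circ> ty) (Pi_pmf V d (\<lambda>_. T))"
    by (rule Pi_pmf_map) (use assms in auto)
  then have "map_pmf (\<lambda>ty. card {v\<in>V. ty v = t}) (Pi_pmf V d (\<lambda>_. T))
      = map_pmf (\<lambda>f. card {v\<in>V. f v}) (Pi_pmf V (d = t) (\<lambda>_. bernoulli_pmf (pmf T t)))"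
    by (simp add: map_pmf_eq_bernoulli_pmf pmf.map_comp o_def)
  also have "\<dots> = binomial_pmf (card V) (pmf T t)"
    by (rule binomial_pmf_altdef'[symmetric]) (use assms in \<open>auto simp: pmf_le_1\<close>)
  finally show ?thesis .
qed

lemma prob_Pi_pmf_card_le_Hoeffding:
  assumes "finite V" "card V = n" "0 < n" "0 \<le> \<epsilon>"
  shows "measure_pmf.prob (Pi_pmf V d (\<lambda>_. T))
           {ty. real (card {v\<in>V. ty v = t}) \<le> real n * pmf T t - \<epsilon>} \<le> exp (-2 * \<epsilon>\<^sup>2 / real n)"
proof -
  interpret binomial_distribution n "pmf T t"
    by unfold_locales (simp add: pmf_le_1)
  have "measure_pmf.prob (Pi_pmf V d (\<lambda>_. T))
          {ty. real (card {v\<in>V. ty v = t}) \<le> real n * pmf T t - \<epsilon>}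
      = measure_pmf.prob (map_pmf (\<lambda>ty. card {v\<in>V. ty v = t}) (Pi_pmf V d (\<lambda>_. T)))
          {x. real x \<le> real n * pmf T t - \<epsilon>}"
    by simp
  also have "\<dots> = measure_pmf.prob (binomial_pmf n (pmf T t)) {x. real x \<le> real n * pmf T t - \<epsilon>}"
    by (simp only: card_Pi_pmf_eq_binomial_pmf[OF assms(1)] assms(2))
  also have "\<dots> \<le> exp (-2 * \<epsilon>\<^sup>2 / real n)"
    using prob_le assms(3,4) by blast
  finally show ?thesis .
qed

lemma card_Pi_pmf_subset_eq_binomial_pmf:
  assumes "finite A" "S \<subseteq> A" "p \<in> {0..1}" "\<And>x. x \<in> S \<Longrightarrow> P x = bernoulli_pmf p"
  shows "map_pmf (\<lambda>f. card {x\<in>S. f x}) (Pi_pmf A False P) = binomial_pmf (card S) p"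
proof -
  have "map_pmf (\<lambda>f. card {x\<in>S. f x}) (Pi_pmf A False P)
      = map_pmf (\<lambda>f. card {x\<in>S. f x}) (map_pmf (\<lambda>f x. if x \<in> S then f x else False) (Pi_pmf A False P))"
    by (simp add: pmf.map_comp o_def cong: conj_cong)
  also have "\<dots> = map_pmf (\<lambda>f. card {x\<in>S. f x}) (Pi_pmf S False P)"
    using Pi_pmf_subset[OF assms(1,2), of False P] by simp
  also have "Pi_pmf S False P = Pi_pmf S False (\<lambda>_. bernoulli_pmf p)"
    by (rule Pi_pmf_cong) (use assms in auto)
  also have "map_pmf (\<lambda>f. card {x\<in>S. f x}) \<dots> = binomial_pmf (card S) p"
    by (rule binomial_pmf_altdef'[symmetric]) (use assms finite_subset in auto)
  finally show ?thesis .
qed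

lemma measure_bind_pmf_le:
  assumes "\<And>x. x \<notin> B \<Longrightarrow> measure_pmf.prob (K x) E \<le> b" "0 \<le> b"
  shows "measure_pmf.prob (bind_pmf M K) E \<le> measure_pmf.prob M B + b"
proof -
  have "emeasure (K x) E \<le> indicator B x + ennreal b" for x
  proof (cases "x \<in> B")
    case True
    have "emeasure (K x) E \<le> 1" by (rule measure_pmf.emeasure_le_1)
    also have "\<dots> \<le> indicator B x + ennreal b" using True by simp
    finally show ?thesis .
  qed (use assms(1) in \<open>simp add: measure_pmf.emeasure_eq_measure ennreal_leI\<close>)
  then have "emeasure (bind_pmf M K) E \<le> (\<integral>\<^sup>+x. indicator B x + ennreal b \<partial>M)"
    by (simp add: nn_integral_mono)
  also have "\<dots> = ennreal (measure_pmf.prob M B + b)"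
    using assms(2)
    by (simp add: nn_integral_add measure_pmf.emeasure_space_1 measure_pmf.emeasure_eq_measure
        ennreal_plus)
  finally show ?thesis
    using assms(2) by (simp add: measure_pmf.emeasure_eq_measure del: ennreal_plus)
qed

lemma finite_arc_slots: "finite (arc_slots n)"
  unfolding arc_slots_def vertices_def
  by (rule finite_subset[of _ "{1..n} \<times> {1..n}"]) auto

lemma card_arc_slots_between_types_ge:
  fixes ty :: "nat \<Rightarrow> nat"
  shows "real (card {v\<in>vertices n. ty v = t}) * real (card {v\<in>vertices n. ty v = s}) - real n
           \<le> real (card {e\<in>arc_slots n. ty (fst e) = t \<and> ty (snd e) = s})"
proof -
  let ?Vt = "{v\<in>vertices n. ty v = t}" and ?Vs = "{v\<in>vertices n. ty v = s}"
  let ?S = "{e\<in>arc_slots n. ty (fst e) = t \<and> ty (snd e) = s}"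
  let ?D = "(\<lambda>v. (v, v)) ` vertices n"
  have "?Vt \<times> ?Vs \<subseteq> ?S \<union> ?D"
    unfolding arc_slots_def by auto
  then have "card (?Vt \<times> ?Vs) \<le> card (?S \<union> ?D)"
    by (rule card_mono[rotated]) (simp add: finite_arc_slots vertices_def)
  also have "\<dots> \<le> card ?S + card ?D"
    by (rule card_Un_le)
  also have "card ?D \<le> n"
    using card_image_le[of "vertices n" "\<lambda>v. (v, v)"] by (simp add: vertices_def)
  finally show ?thesis
    by (simp add: card_cartesian_product flip: of_nat_mult)
qed

lemma IRD_conv_bind_pmf:
  "IRD n T k = bind_pmf (Pi_pmf (vertices n) 0 (\<lambda>_. T)) (\<lambda>ty. map_pmf (Pair ty)
     (Pi_pmf (arc_slots n) False (\<lambda>(v, w). bernoulli_pmf (min (k (ty v) (ty w) / real n) 1))))"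
  unfolding IRD_def map_pmf_def by simp

lemma prob_arc_count_le_given_types:
  fixes ty :: "nat \<Rightarrow> nat" and \<kappa>' :: "nat \<Rightarrow> nat \<Rightarrow> real"
  assumes "0 \<le> kk" "kk \<le> \<kappa>' t s" "kk \<le> real n" "0 \<le> k" "k < \<mu>"
    and \<mu>: "\<mu> \<le> (real (card {v\<in>vertices n. ty v = t}) * real (card {v\<in>vertices n. ty v = s})
                  - real n) * (kk / real n)"
  shows "measure_pmf.prob
           (Pi_pmf (arc_slots n) False (\<lambda>(v, w). bernoulli_pmf (min (\<kappa>' (ty v) (ty w) / real n) 1)))
           {ar. real (arc_count n (ty, ar) t s) \<le> k}
         \<le> exp (- (\<mu> - k)\<^sup>2 / (2 * \<mu>))"
proof -
  define S where "S = {e\<in>arc_slots n. ty (fst e) = t \<and> ty (snd e) = s}"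
  define p where "p = min (\<kappa>' t s / real n) 1"
  have p: "p \<in> {0..1}" and kk_p: "kk / real n \<le> p"
    using assms(1-3) by (auto simp: p_def divide_right_mono divide_le_eq_1)
  have "\<mu> \<le> real (card S) * (kk / real n)"
    using \<mu> mult_right_mono[OF card_arc_slots_between_types_ge, of "kk / real n" n ty t s]
      assms(1) by (simp add: S_def)
  also have "\<dots> \<le> real (card S) * p"
    using kk_p by (rule mult_left_mono) simp
  finally have \<mu>_le: "\<mu> \<le> real (card S) * p" .
  have "arc_count n (ty, ar) t s = card {e\<in>S. ar e}" for ar
    unfolding arc_count_def S_def by (intro arg_cong[where f = card]) auto
  then have "{ar. real (arc_count n (ty, ar) t s) \<le> k}
      = (\<lambda>ar. card {e\<in>S. ar e}) -` {x. real x \<le> k}"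
    by auto
  moreover have "map_pmf (\<lambda>ar. card {e\<in>S. ar e})
      (Pi_pmf (arc_slots n) False (\<lambda>(v, w). bernoulli_pmf (min (\<kappa>' (ty v) (ty w) / real n) 1)))
      = binomial_pmf (card S) p"
    by (rule card_Pi_pmf_subset_eq_binomial_pmf[OF finite_arc_slots _ p])
       (auto simp: S_def p_def)
  ultimately have "measure_pmf.prob
       (Pi_pmf (arc_slots n) False (\<lambda>(v, w). bernoulli_pmf (min (\<kappa>' (ty v) (ty w) / real n) 1)))
       {ar. real (arc_count n (ty, ar) t s) \<le> k}
      = measure_pmf.prob (binomial_pmf (card S) p) {x. real x \<le> k}"
    by (metis measure_map_pmf)
  also have "\<dots> \<le> exp (- (\<mu> - k)\<^sup>2 / (2 * \<mu>))"
    using prob_binomial_pmf_le_Chernoff[OF p] assms(4,5) \<mu>_le by simp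
  finally show ?thesis .
qed

lemma prob_IRD_arc_count_le:
  fixes T :: "nat pmf" and \<kappa>' :: "nat \<Rightarrow> nat \<Rightarrow> real"
  assumes "0 < n" "0 \<le> a" "a \<le> real n * pmf T t" "a \<le> real n * pmf T s"
    and "0 \<le> kk" "kk \<le> \<kappa>' t s" "kk \<le> real n" "0 \<le> k" "k < \<mu>"
    and \<mu>: "\<mu> = ((real n * pmf T t - a) * (real n * pmf T s - a) - real n) * (kk / real n)"
  shows "measure_pmf.prob (IRD n T \<kappa>') {G. real (arc_count n G t s) \<le> k}
           \<le> 2 * exp (-2 * a\<^sup>2 / real n) + exp (- (\<mu> - k)\<^sup>2 / (2 * \<mu>))"
proof -
  define PT where "PT = Pi_pmf (vertices n) 0 (\<lambda>_. T)"
  define scarce where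
    "scarce = (\<lambda>u. {ty. real (card {v\<in>vertices n. ty v = u}) \<le> real n * pmf T u - a})"
  have given_types: "measure_pmf.prob
      (Pi_pmf (arc_slots n) False (\<lambda>(v, w). bernoulli_pmf (min (\<kappa>' (ty v) (ty w) / real n) 1)))
      {ar. real (arc_count n (ty, ar) t s) \<le> k} \<le> exp (- (\<mu> - k)\<^sup>2 / (2 * \<mu>))"
    if "ty \<notin> scarce t \<union> scarce s" for ty
  proof (rule prob_arc_count_le_given_types)
    show "0 \<le> kk" "kk \<le> \<kappa>' t s" "kk \<le> real n" "0 \<le> k" "k < \<mu>" by (fact assms)+
    have "real n * pmf T t - a \<le> real (card {v\<in>vertices n. ty v = t})"
      and "real n * pmf T s - a \<le> real (card {v\<in>vertices n. ty v = s})"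
      using that by (auto simp: scarce_def)
    then show "\<mu> \<le> (real (card {v\<in>vertices n. ty v = t}) * real (card {v\<in>vertices n. ty v = s})
        - real n) * (kk / real n)"
      unfolding \<mu> using assms(3-5) by (intro mult_right_mono diff_right_mono mult_mono) auto
  qed
  have scarce_unlikely: "measure_pmf.prob PT (scarce u) \<le> exp (-2 * a\<^sup>2 / real n)" for u
    unfolding PT_def scarce_def
    by (rule prob_Pi_pmf_card_le_Hoeffding) (use assms(1,2) in \<open>simp_all add: vertices_def\<close>)
  have "measure_pmf.prob (IRD n T \<kappa>') {G. real (arc_count n G t s) \<le> k}
      \<le> measure_pmf.prob PT (scarce t \<union> scarce s) + exp (- (\<mu> - k)\<^sup>2 / (2 * \<mu>))"
    unfolding IRD_conv_bind_pmf PT_def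
    by (intro measure_bind_pmf_le) (use given_types in auto)
  also have "measure_pmf.prob PT (scarce t \<union> scarce s)
      \<le> measure_pmf.prob PT (scarce t) + measure_pmf.prob PT (scarce s)"
    by (rule measure_subadditive) (simp_all add: measure_pmf.emeasure_eq_measure)
  finally show ?thesis
    using scarce_unlikely[of t] scarce_unlikely[of s] by linarith
qed

lemma prob_IRD_arc_count_le_log:
  fixes T :: "nat pmf" and \<kappa>' :: "nat \<Rightarrow> nat \<Rightarrow> real" and n :: nat
  defines "a \<equiv> sqrt (real n) * ln (real n)"
  assumes "0 < n" "a \<le> real n * pmf T t" "a \<le> real n * pmf T s"
    and "0 \<le> kk" "kk \<le> \<kappa>' t s" "kk \<le> real n" "0 \<le> k" "k < \<mu>"
    and \<mu>: "\<mu> = ((real n * pmf T t - a) * (real n * pmf T s - a) - real n) * (kk / real n)"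
    and gap: "\<mu> * (ln (real n))\<^sup>2 \<le> (\<mu> - k)\<^sup>2"
    and "2 * exp (-2 * (ln (real n))\<^sup>2) \<le> exp (- (ln (real n))\<^sup>2 / 2)"
  shows "measure_pmf.prob (IRD n T \<kappa>') {G. real (arc_count n G t s) \<le> k}
           \<le> 2 * exp (- (ln (real n))\<^sup>2 / 2)"
proof -
  have "0 \<le> a" using assms(2) by (simp add: a_def)
  have "measure_pmf.prob (IRD n T \<kappa>') {G. real (arc_count n G t s) \<le> k}
      \<le> 2 * exp (-2 * a\<^sup>2 / real n) + exp (- (\<mu> - k)\<^sup>2 / (2 * \<mu>))"
    by (rule prob_IRD_arc_count_le; fact assms(2-10) \<open>0 \<le> a\<close>)
  also have "-2 * a\<^sup>2 / real n = -2 * (ln (real n))\<^sup>2"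
    using assms(2) by (simp add: a_def power_mult_distrib)
  also have "exp (- (\<mu> - k)\<^sup>2 / (2 * \<mu>)) \<le> exp (- (ln (real n))\<^sup>2 / 2)"
  proof -
    have "(ln (real n))\<^sup>2 / 2 \<le> (\<mu> - k)\<^sup>2 / (2 * \<mu>)"
      using gap assms(8,9) by (simp add: field_simps)
    then show ?thesis by simp
  qed
  finally show ?thesis
    using assms(12) by linarith
qed

lemma eventually_prob_IRD_arc_count_le:
  fixes T :: "nat pmf" and k C \<alpha> :: real
  assumes "0 < pmf T t" "0 < pmf T s" "0 < k" "0 < C" "0 < \<alpha>" "\<alpha> < 1/2"
  shows "eventually (\<lambda>n. \<forall>\<kappa>'.
           k + C * real n powr (-1/2 + \<alpha>) / sqrt (pmf T t * pmf T s) \<le> \<kappa>' t s \<longrightarrow>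
           measure_pmf.prob (IRD n T \<kappa>')
             {G. real (arc_count n G t s) \<le> real n * pmf T t * pmf T s * k}
           \<le> 2 * exp (- (ln (real n))\<^sup>2 / 2)) sequentially"
proof -
  define qt qs where "qt = pmf T t" and "qs = pmf T s"
  define a where "a = (\<lambda>n::nat. sqrt (real n) * ln (real n))"
  define kk where "kk = (\<lambda>n::nat. k + C * real n powr (-1/2 + \<alpha>) / sqrt (qt * qs))"
  define \<mu> where "\<mu> = (\<lambda>n. ((real n * qt - a n) * (real n * qs - a n) - real n) * (kk n / real n))"
  define \<Lambda> where "\<Lambda> = (\<lambda>n::nat. real n * qt * qs * k)"
  have "0 < qt" "0 < qs" using assms(1,2) by (simp_all add: qt_def qs_def)
  then have "eventually (\<lambda>n. 0 < real n \<and> a n \<le> real n * qt \<and> a n \<le> real n * qs \<and> 0 \<le> kk n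
      \<and> kk n \<le> real n \<and> \<Lambda> n < \<mu> n \<and> \<mu> n * (ln (real n))\<^sup>2 \<le> (\<mu> n - \<Lambda> n)\<^sup>2
      \<and> 2 * exp (-2 * (ln (real n))\<^sup>2) \<le> exp (- (ln (real n))\<^sup>2 / 2)) sequentially"
    unfolding a_def kk_def \<mu>_def \<Lambda>_def using assms(3-6) by (intro eventually_conj; real_asymp)
  then show ?thesis
  proof (rule eventually_mono, intro allI impI)
    fix n :: nat and \<kappa>' :: "nat \<Rightarrow> nat \<Rightarrow> real"
    assume "0 < real n \<and> a n \<le> real n * qt \<and> a n \<le> real n * qs \<and> 0 \<le> kk n
      \<and> kk n \<le> real n \<and> \<Lambda> n < \<mu> n \<and> \<mu> n * (ln (real n))\<^sup>2 \<le> (\<mu> n - \<Lambda> n)\<^sup>2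
      \<and> 2 * exp (-2 * (ln (real n))\<^sup>2) \<le> exp (- (ln (real n))\<^sup>2 / 2)"
      and "k + C * real n powr (-1/2 + \<alpha>) / sqrt (pmf T t * pmf T s) \<le> \<kappa>' t s"
    moreover have "0 \<le> \<Lambda> n" using \<open>0 < qt\<close> \<open>0 < qs\<close> assms(3) by (simp add: \<Lambda>_def)
    ultimately show "measure_pmf.prob (IRD n T \<kappa>')
        {G. real (arc_count n G t s) \<le> real n * pmf T t * pmf T s * k}
        \<le> 2 * exp (- (ln (real n))\<^sup>2 / 2)"
      using prob_IRD_arc_count_le_log[where n = n and kk = "kk n" and \<mu> = "\<mu> n" and k = "\<Lambda> n"]
      unfolding a_def kk_def \<mu>_def \<Lambda>_def qt_def qs_def by simp
  qed
qed

lemma eventually_prob_IRD_arc_count_less_floor: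
  fixes T :: "nat pmf" and k C \<alpha> :: real
  assumes "0 \<le> k" "0 < C" "0 < \<alpha>" "\<alpha> < 1/2"
  shows "eventually (\<lambda>n. \<forall>\<kappa>'.
           k + C * real n powr (-1/2 + \<alpha>) / sqrt (pmf T t * pmf T s) \<le> \<kappa>' t s \<longrightarrow>
           measure_pmf.prob (IRD n T \<kappa>')
             {G. int (arc_count n G t s) < \<lfloor>real n * pmf T t * pmf T s * k\<rfloor>}
           \<le> 2 * exp (- (ln (real n))\<^sup>2 / 2)) sequentially"
proof (cases "0 < pmf T t \<and> 0 < pmf T s \<and> 0 < k")
  case True
  have floor_le: "measure_pmf.prob M
        {G. int (arc_count n G t s) < \<lfloor>real n * pmf T t * pmf T s * k\<rfloor>}
      \<le> measure_pmf.prob M {G. real (arc_count n G t s) \<le> real n * pmf T t * pmf T s * k}"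
    for M n by (rule measure_pmf.finite_measure_mono) (auto, linarith)
  have "eventually (\<lambda>n. \<forall>\<kappa>'.
      k + C * real n powr (-1/2 + \<alpha>) / sqrt (pmf T t * pmf T s) \<le> \<kappa>' t s \<longrightarrow>
      measure_pmf.prob (IRD n T \<kappa>')
        {G. real (arc_count n G t s) \<le> real n * pmf T t * pmf T s * k}
      \<le> 2 * exp (- (ln (real n))\<^sup>2 / 2)) sequentially"
    using True assms(2-4) by (intro eventually_prob_IRD_arc_count_le) auto
  then show ?thesis
    by (rule eventually_mono) (use floor_le in \<open>blast intro: order.trans\<close>)
next
  case False
  then have "pmf T t * pmf T s * k = 0"
    using assms(1) pmf_nonneg[of T t] pmf_nonneg[of T s] by (metis less_eq_real_def mult_eq_0_iff)
  then have "{G. int (arc_count n G t s) < \<lfloor>real n * pmf T t * pmf T s * k\<rfloor>} = {}" for n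
    by (simp only: mult.assoc) simp
  then show ?thesis by (simp del: Collect_empty_eq)
qed

theorem lemma3:
  fixes T :: "nat pmf" and \<delta> \<tau> \<alpha> C :: real
    and \<kappa> :: "nat \<Rightarrow> nat \<Rightarrow> real" and \<kappa>' :: "nat \<Rightarrow> nat \<Rightarrow> nat \<Rightarrow> real"
    and t s :: nat
  assumes "\<delta> > 0"
    and "integrable (measure_pmf T) (\<lambda>x. real x powr \<delta>)"
    and "0 < \<tau>" and "\<tau> < 1"
    and "\<forall>x y. \<kappa> x y \<ge> 0"
    and "\<forall>n x y. \<kappa>' n x y \<ge> 0"
    and "1/2 - \<tau>/2 < \<alpha>" and "\<alpha> < 1/2" and "C > 0"
  shows "\<exists>N. \<forall>n\<ge>N.
           stable T n \<tau> t \<and> stable T n \<tau> s \<and>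
           \<kappa>' n t s \<ge> \<kappa> t s + C * real n powr (-1/2 + \<alpha>) / sqrt (pmf T t * pmf T s)
           \<longrightarrow> measure_pmf.prob (IRD n T (\<kappa>' n))
                 {G. int (arc_count n G t s) < \<lfloor>real n * pmf T t * pmf T s * \<kappa> t s\<rfloor>}
               \<le> 2 * exp (- ((ln (real n))\<^sup>2) / 2)"
proof -
  have "0 < \<alpha>" using assms(4,7) by simp
  then obtain N where "\<forall>n\<ge>N. \<forall>\<kappa>''.
      \<kappa> t s + C * real n powr (-1/2 + \<alpha>) / sqrt (pmf T t * pmf T s) \<le> \<kappa>'' t s \<longrightarrow>
      measure_pmf.prob (IRD n T \<kappa>'')
        {G. int (arc_count n G t s) < \<lfloor>real n * pmf T t * pmf T s * \<kappa> t s\<rfloor>}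
      \<le> 2 * exp (- (ln (real n))\<^sup>2 / 2)"
    using eventually_prob_IRD_arc_count_less_floor[of "\<kappa> t s" C \<alpha> T t s] assms(5,8,9)
    unfolding eventually_sequentially by blast
  then show ?thesis by blast
qed

end
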